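(* Let $(\Omega,\mathcal{F},\mathbb{P})$ be a probability space with a filtration $\{\mathcal{F}_n\}_{n=0}^\infty$, let $U$ be a stopping time with respect to $\{\mathcal{F}_n\}_{n=0}^\infty$, and let $\{X_n\}_{n=0}^\infty$ be a martingale (resp. supermartingale) adapted to $\{\mathcal{F}_n\}_{n=0}^\infty$. Put $Y=X_U$. Suppose there exist real numbers $M,c_1,c_2,d>0$ such that (i) for all sufficiently large $n\in\mathbb{N}$, $\mathbb{P}(U>n)\le c_1\cdot e^{-c_2\cdot n}$, and (ii) for all $n\in\mathbb{N}$, $|X_{n+1}-X_n|\le M\cdot n^d$ almost surely. Then $\mathbb{E}(|Y|)<\infty$ and $\mathbb{E}(Y)=\mathbb{E}(X_0)$ (resp. $\mathbb{E}(Y)\le\mathbb{E}(X_0)$).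
   Context: A stopping time with respect to $\{\mathcal{F}_n\}$ is a random variable $U:\Omega\to\mathbb{N}\cup\{0,\infty\}$ with $\{U\le n\}\in\mathcal{F}_n$ for all $n$. A process $\{X_n\}$ adapted to $\{\mathcal{F}_n\}$ is a martingale (resp. supermartingale) if $\mathbb{E}(|X_n|)<\infty$ for all $n$ and $\mathbb{E}(X_{n+1}\mid\mathcal{F}_n)=X_n$ (resp. $\le X_n$) almost surely. $X_U$ denotes the random variable $\omega\mapsto X_{U(\omega)}(\omega)$ (well defined almost surely, since condition (i) implies $U<\infty$ a.s.). *)

theory Defs
  imports "HOL-Probability.Probability"
begin

definition nat_filtration :: "'a measure \<Rightarrow> (nat \<Rightarrow> 'a measure) \<Rightarrow> bool" where
  "nat_filtration M F \<longleftrightarrow> (\<forall>n. subalgebra M (F n)) \<and> (\<forall>n m. n \<le> m \<longrightarrow> sets (F n) \<subseteq> sets (F m))"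

definition enat_stopping_time :: "'a measure \<Rightarrow> (nat \<Rightarrow> 'a measure) \<Rightarrow> ('a \<Rightarrow> enat) \<Rightarrow> bool" where
  "enat_stopping_time M F U \<longleftrightarrow> (\<forall>n. {x \<in> space M. U x \<le> enat n} \<in> sets (F n))"

definition adapted :: "(nat \<Rightarrow> 'a measure) \<Rightarrow> (nat \<Rightarrow> 'a \<Rightarrow> real) \<Rightarrow> bool" where
  "adapted F X \<longleftrightarrow> (\<forall>n. X n \<in> borel_measurable (F n))"

definition martingale :: "'a measure \<Rightarrow> (nat \<Rightarrow> 'a measure) \<Rightarrow> (nat \<Rightarrow> 'a \<Rightarrow> real) \<Rightarrow> bool" where
  "martingale M F X \<longleftrightarrow> adapted F X \<and> (\<forall>n. integrable M (X n)) \<and>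
     (\<forall>n. AE x in M. real_cond_exp M (F n) (X (Suc n)) x = X n x)"

definition supermartingale :: "'a measure \<Rightarrow> (nat \<Rightarrow> 'a measure) \<Rightarrow> (nat \<Rightarrow> 'a \<Rightarrow> real) \<Rightarrow> bool" where
  "supermartingale M F X \<longleftrightarrow> adapted F X \<and> (\<forall>n. integrable M (X n)) \<and>
     (\<forall>n. AE x in M. real_cond_exp M (F n) (X (Suc n)) x \<le> X n x)"

text \<open>The stopped value X_U (arbitrary where U = \<infinity>, a null set under the hypotheses).\<close>
definition stopped_value :: "(nat \<Rightarrow> 'a \<Rightarrow> real) \<Rightarrow> ('a \<Rightarrow> enat) \<Rightarrow> 'a \<Rightarrow> real" where
  "stopped_value X U = (\<lambda>x. X (the_enat (U x)) x)"

end

theory Submission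
  imports Defs "HOL-Real_Asymp.Real_Asymp"
begin

text \<open>
  On \<open>{U < \<infinity>}\<close>, which has full measure, \<open>X\<^sub>U - X\<^sub>0\<close> is the finite telescoping sum of
  the increments \<open>(X\<^sub>k\<^sub>+\<^sub>1 - X\<^sub>k) \<cdot> 1{U > k}\<close> of the stopped process. The \<open>k\<close>-th increment has
  \<open>L\<^sup>1\<close>-norm at most \<open>K k\<^sup>d P(U > k)\<close>, which decays exponentially, so the series may be
  integrated termwise. As \<open>{U > k}\<close> is \<open>F\<^sub>k\<close>-measurable, the (super)martingale property gives
  each increment integral \<open>0\<close> (resp. \<open>\<le> 0\<close>).
\<close>

lemma summable_powr_mult_exp_neg:
  fixes c d :: real
  assumes "c > 0"
  shows "summable (\<lambda>k::nat. real k powr d * exp (- c * real k))"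
proof (rule summable_comparison_test_ev)
  have "eventually (\<lambda>k::nat. real k powr d * exp (- c * real k) \<le> 1 / real k ^ 2) sequentially"
    using assms by real_asymp
  then show "eventually (\<lambda>k. norm (real k powr d * exp (- c * real k)) \<le> inverse (real k ^ 2)) sequentially"
    by eventually_elim (simp add: field_simps)
  show "summable (\<lambda>k::nat. inverse (real k ^ 2))"
    by (rule inverse_power_summable) simp
qed

lemma enat_stopping_time_measurable:
  assumes "nat_filtration M F" and "enat_stopping_time M F U"
  shows "U \<in> M \<rightarrow>\<^sub>M count_space UNIV"
proof -
  have le: "{x \<in> space M. U x \<le> enat n} \<in> sets M" for n
    using assms by (auto simp: nat_filtration_def enat_stopping_time_def subalgebra_def)
  have "U x = enat n \<longleftrightarrow> U x \<le> enat n \<and> (\<forall>m<n. \<not> U x \<le> enat m)" for x n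
    by (cases "U x") (auto simp: not_le le_less)
  then have "{x \<in> space M. U x = enat n} =
      {x \<in> space M. U x \<le> enat n} - (\<Union>m<n. {x \<in> space M. U x \<le> enat m})" for n
    by blast
  then have fin: "{x \<in> space M. U x = enat n} \<in> sets M" for n
    using le by auto
  have "{x \<in> space M. U x = \<infinity>} = space M - (\<Union>n. {x \<in> space M. U x = enat n})"
    by auto
  then have inf: "{x \<in> space M. U x = \<infinity>} \<in> sets M"
    using fin by auto
  show ?thesis
    unfolding measurable_count_space_eq2_countable
  proof safe
    fix a :: enat
    show "U -` {a} \<inter> space M \<in> sets M"
      using fin inf by (cases a) (auto simp: vimage_def Int_def conj_commute)
  qed simp
qed

lemma enat_stopping_time_greater_sets:
  assumes "nat_filtration M F" and "enat_stopping_time M F U"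
  shows "{x \<in> space M. enat k < U x} \<in> sets (F k)"
proof -
  have "{x \<in> space M. enat k < U x} = space (F k) - {x \<in> space M. U x \<le> enat k}"
    using assms(1) by (auto simp: nat_filtration_def subalgebra_def not_le)
  then show ?thesis
    using assms(2) by (auto simp: enat_stopping_time_def)
qed

lemma AE_enat_finite_if_tail_tendsto_0:
  assumes "finite_measure M" and "U \<in> M \<rightarrow>\<^sub>M count_space UNIV"
    and "(\<lambda>n. measure M {x \<in> space M. enat n < U x}) \<longlonglongrightarrow> 0"
  shows "AE x in M. U x \<noteq> \<infinity>"
proof -
  interpret finite_measure M by fact
  have [measurable]: "U \<in> M \<rightarrow>\<^sub>M count_space UNIV" by fact
  have "measure M {x \<in> space M. U x = \<infinity>} \<le> measure M {x \<in> space M. enat n < U x}" for n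
    by (intro finite_measure_mono) auto
  then have "measure M {x \<in> space M. U x = \<infinity>} \<le> 0"
    by (intro LIMSEQ_le_const[OF assms(3)]) auto
  then show ?thesis
    by (subst AE_iff_measurable[of "{x \<in> space M. U x = \<infinity>}"]) (auto simp: emeasure_eq_measure measure_le_0_iff)
qed

definition stopped_increment :: "(nat \<Rightarrow> 'a \<Rightarrow> real) \<Rightarrow> ('a \<Rightarrow> enat) \<Rightarrow> nat \<Rightarrow> 'a \<Rightarrow> real" where
  "stopped_increment X U k x = (if enat k < U x then X (Suc k) x - X k x else 0)"

lemma stopped_increment_eq_indicator:
  "stopped_increment X U k x =
     (X (Suc k) x - X k x) * indicator {x \<in> space M. enat k < U x} x"
  if "x \<in> space M"
  using that by (simp add: stopped_increment_def indicator_def)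

lemma stopped_increment_sums:
  assumes "U x = enat m"
  shows "(\<lambda>k. stopped_increment X U k x) sums (stopped_value X U x - X 0 x)"
proof -
  have "(\<lambda>k. stopped_increment X U k x) sums (\<Sum>k<m. stopped_increment X U k x)"
    by (rule sums_finite) (auto simp: stopped_increment_def assms)
  also have "(\<Sum>k<m. stopped_increment X U k x) = (\<Sum>k<m. X (Suc k) x - X k x)"
    by (simp add: stopped_increment_def assms)
  also have "\<dots> = stopped_value X U x - X 0 x"
    by (simp add: sum_lessThan_telescope[of "\<lambda>k. X k x"] stopped_value_def assms)
  finally show ?thesis .
qed

lemma integrable_stopped_increment:
  assumes [measurable]: "U \<in> M \<rightarrow>\<^sub>M count_space UNIV"
    and "integrable M (X k)" and "integrable M (X (Suc k))"
  shows "integrable M (stopped_increment X U k)"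
proof -
  have "{x \<in> space M. enat k < U x} \<in> sets M" by measurable
  then have "integrable M (\<lambda>x. (X (Suc k) x - X k x) * indicator {x \<in> space M. enat k < U x} x)"
    using assms by (intro integrable_real_mult_indicator Bochner_Integration.integrable_diff)
  then show ?thesis
    by (simp add: Bochner_Integration.integrable_cong[OF refl stopped_increment_eq_indicator])
qed

lemma integral_abs_stopped_increment_le:
  assumes "finite_measure M" and [measurable]: "U \<in> M \<rightarrow>\<^sub>M count_space UNIV"
    and "integrable M (X k)" and "integrable M (X (Suc k))"
    and "AE x in M. \<bar>X (Suc k) x - X k x\<bar> \<le> B"
  shows "(\<integral>x. \<bar>stopped_increment X U k x\<bar> \<partial>M) \<le> B * measure M {x \<in> space M. enat k < U x}"
proof -
  interpret finite_measure M by fact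
  have A: "{x \<in> space M. enat k < U x} \<in> sets M" by measurable
  have "(\<integral>x. \<bar>stopped_increment X U k x\<bar> \<partial>M) \<le> (\<integral>x. B * indicator {x \<in> space M. enat k < U x} x \<partial>M)"
    using assms(5) A
    by (intro integral_mono_AE integrable_abs integrable_stopped_increment assms integrable_real_mult_indicator)
       (auto simp: stopped_increment_def split: split_indicator elim!: eventually_mono)
  also have "\<dots> = B * measure M {x \<in> space M. enat k < U x}"
    using A by simp
  finally show ?thesis .
qed

lemma nat_filtration_sigma_finite_subalgebra:
  assumes "prob_space M" and "nat_filtration M F"
  shows "sigma_finite_subalgebra M (F n)"
proof -
  interpret prob_space M by fact
  show ?thesis
    using assms(2)
    by (intro finite_measure_subalgebra_is_sigma_finite)
       (simp add: finite_measure_subalgebra_def finite_measure_subalgebra_axioms_def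
          nat_filtration_def finite_measure_axioms)
qed

lemma (in sigma_finite_subalgebra) integral_diff_mult_indicator_real_cond_exp:
  assumes "A \<in> sets F" and "integrable M f" and "integrable M g"
  shows "(\<integral>x. (f x - g x) * indicator A x \<partial>M) =
    (\<integral>x. (real_cond_exp M F f x - g x) * indicator A x \<partial>M)"
proof -
  have [measurable]: "A \<in> sets M"
    using assms(1) subalg by (auto simp: subalgebra_def)
  have [measurable]: "indicator A \<in> borel_measurable F"
    using assms(1) by measurable
  have int: "integrable M (\<lambda>x. h x * indicator A x)" if "integrable M h" for h :: "'a \<Rightarrow> real"
    using that by (intro integrable_real_mult_indicator) auto
  have "(\<integral>x. indicator A x * real_cond_exp M F f x \<partial>M) = (\<integral>x. indicator A x * f x \<partial>M)"
    using int[OF assms(2)] borel_measurable_integrable[OF assms(2)]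
    by (intro real_cond_exp_intg(2)) (auto simp: mult.commute)
  then have "(\<integral>x. real_cond_exp M F f x * indicator A x \<partial>M) = (\<integral>x. f x * indicator A x \<partial>M)"
    by (simp add: mult.commute)
  then show ?thesis
    using int[OF assms(2)] int[OF assms(3)] int[OF real_cond_exp_int(1)[OF assms(2)]]
    by (simp add: left_diff_distrib)
qed

lemma integral_stopped_increment_eq_real_cond_exp:
  assumes "prob_space M" and "nat_filtration M F" and "enat_stopping_time M F U"
    and "\<And>n. integrable M (X n)"
  shows "(\<integral>x. stopped_increment X U k x \<partial>M) =
    (\<integral>x. (real_cond_exp M (F k) (X (Suc k)) x - X k x) * indicator {x \<in> space M. enat k < U x} x \<partial>M)"
proof -
  interpret sigma_finite_subalgebra M "F k"
    using assms(1,2) by (rule nat_filtration_sigma_finite_subalgebra)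
  have "(\<integral>x. stopped_increment X U k x \<partial>M) =
      (\<integral>x. (X (Suc k) x - X k x) * indicator {x \<in> space M. enat k < U x} x \<partial>M)"
    by (intro Bochner_Integration.integral_cong refl stopped_increment_eq_indicator)
  also have "\<dots> = (\<integral>x. (real_cond_exp M (F k) (X (Suc k)) x - X k x) * indicator {x \<in> space M. enat k < U x} x \<partial>M)"
    using assms(2,3) by (intro integral_diff_mult_indicator_real_cond_exp enat_stopping_time_greater_sets assms(4))
  finally show ?thesis .
qed

lemma martingale_integral_stopped_increment:
  assumes "prob_space M" and "nat_filtration M F" and "enat_stopping_time M F U"
    and "martingale M F X"
  shows "(\<integral>x. stopped_increment X U k x \<partial>M) = 0"
  using assms
  by (subst integral_stopped_increment_eq_real_cond_exp[OF assms(1-3)])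
     (auto simp: martingale_def intro!: integral_eq_zero_AE elim!: eventually_mono[OF spec[of _ k]])

lemma supermartingale_integral_stopped_increment:
  assumes "prob_space M" and "nat_filtration M F" and "enat_stopping_time M F U"
    and "supermartingale M F X"
  shows "(\<integral>x. stopped_increment X U k x \<partial>M) \<le> 0"
proof -
  have "\<And>n. integrable M (X n)"
    using assms(4) by (simp add: supermartingale_def)
  note eq = integral_stopped_increment_eq_real_cond_exp[OF assms(1-3) this]
  have "0 \<le> (\<integral>x. - ((real_cond_exp M (F k) (X (Suc k)) x - X k x) *
      indicator {x \<in> space M. enat k < U x} x) \<partial>M)"
    by (rule integral_nonneg_AE) (use assms(4) in \<open>auto simp: supermartingale_def
        elim!: eventually_mono[OF spec[of _ k]] split: split_indicator\<close>)
  then show ?thesis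
    unfolding eq by simp
qed

lemma stopped_value_integrable_and_sums:
  assumes [measurable]: "U \<in> M \<rightarrow>\<^sub>M count_space UNIV"
    and "AE x in M. U x \<noteq> \<infinity>" and "\<And>n. integrable M (X n)"
    and "summable (\<lambda>k. \<integral>x. \<bar>stopped_increment X U k x\<bar> \<partial>M)"
  shows "integrable M (stopped_value X U)"
    and "(\<lambda>k. \<integral>x. stopped_increment X U k x \<partial>M)
           sums ((\<integral>x. stopped_value X U x \<partial>M) - (\<integral>x. X 0 x \<partial>M))"
proof -
  have incr: "integrable M (stopped_increment X U k)" for k
    by (intro integrable_stopped_increment assms)
  have [measurable]: "X n \<in> borel_measurable M" for n
    using assms(3) by blast
  have stopped_value_measurable: "stopped_value X U \<in> borel_measurable M"
    unfolding stopped_value_def by (rule measurable_compose_countable[where f=X]) measurable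
  have pointwise: "AE x in M. summable (\<lambda>k. norm (stopped_increment X U k x)) \<and>
      stopped_value X U x = X 0 x + (\<Sum>k. stopped_increment X U k x)"
    using assms(2)
  proof eventually_elim
    case (elim x)
    then obtain m where m: "U x = enat m" by auto
    have "summable (\<lambda>k. norm (stopped_increment X U k x))"
      by (rule summable_finite[of "{..<m}"]) (auto simp: stopped_increment_def m)
    moreover have "(\<Sum>k. stopped_increment X U k x) = stopped_value X U x - X 0 x"
      using stopped_increment_sums[where U=U and x=x and X=X, OF m] by (rule sums_unique[symmetric])
    ultimately show ?case by simp
  qed
  have summable_norm: "summable (\<lambda>k. \<integral>x. norm (stopped_increment X U k x) \<partial>M)"
    using assms(4) by simp
  have "AE x in M. summable (\<lambda>k. norm (stopped_increment X U k x))"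
    using pointwise by auto
  note series = integrable_suminf[OF incr this summable_norm] sums_integral[OF incr this summable_norm]
  have sum_integrable: "integrable M (\<lambda>x. X 0 x + (\<Sum>k. stopped_increment X U k x))"
    using series(1) assms(3) by simp
  have "AE x in M. X 0 x + (\<Sum>k. stopped_increment X U k x) = stopped_value X U x"
    using pointwise by auto
  then show "integrable M (stopped_value X U)"
    using integrable_cong_AE_imp sum_integrable stopped_value_measurable by blast
  have "(\<integral>x. stopped_value X U x \<partial>M) = (\<integral>x. X 0 x + (\<Sum>k. stopped_increment X U k x) \<partial>M)"
    using pointwise stopped_value_measurable borel_measurable_integrable[OF sum_integrable]
    by (intro integral_cong_AE) auto
  also have "\<dots> = (\<integral>x. X 0 x \<partial>M) + (\<integral>x. (\<Sum>k. stopped_increment X U k x) \<partial>M)"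
    using series(1) assms(3) by simp
  finally show "(\<lambda>k. \<integral>x. stopped_increment X U k x \<partial>M)
      sums ((\<integral>x. stopped_value X U x \<partial>M) - (\<integral>x. X 0 x \<partial>M))"
    using series(2) by simp
qed

lemma summable_integral_abs_stopped_increment:
  assumes "prob_space M" and "U \<in> M \<rightarrow>\<^sub>M count_space UNIV" and "\<And>n. integrable M (X n)"
    and "K \<ge> 0" and "c > 0"
    and tail: "eventually (\<lambda>n. measure M {x \<in> space M. enat n < U x} \<le> C * exp (- c * real n)) sequentially"
    and increments: "eventually (\<lambda>n. AE x in M. \<bar>X (Suc n) x - X n x\<bar> \<le> K * real n powr d) sequentially"
  shows "summable (\<lambda>k. \<integral>x. \<bar>stopped_increment X U k x\<bar> \<partial>M)"
proof (rule summable_comparison_test_ev)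
  interpret prob_space M by fact
  show "eventually (\<lambda>k. norm (\<integral>x. \<bar>stopped_increment X U k x\<bar> \<partial>M)
      \<le> K * C * (real k powr d * exp (- c * real k))) sequentially"
    using tail increments
  proof eventually_elim
    case (elim k)
    have "norm (\<integral>x. \<bar>stopped_increment X U k x\<bar> \<partial>M) = (\<integral>x. \<bar>stopped_increment X U k x\<bar> \<partial>M)"
      by simp
    also have "\<dots> \<le> K * real k powr d * measure M {x \<in> space M. enat k < U x}"
      using elim(2) by (intro integral_abs_stopped_increment_le assms finite_measure_axioms)
    also have "\<dots> \<le> K * real k powr d * (C * exp (- c * real k))"
      using elim(1) assms(4) by (intro mult_left_mono) auto
    finally show ?case by (simp add: algebra_simps)
  qed
  show "summable (\<lambda>k. K * C * (real k powr d * exp (- c * real k)))"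
    using assms(5) by (intro summable_mult summable_powr_mult_exp_neg)
qed

lemma stopped_value_integrable_and_sums_if_exponential_tail:
  assumes "prob_space M" and "nat_filtration M F" and "enat_stopping_time M F U"
    and "\<And>n. integrable M (X n)" and "K \<ge> 0" and "c > 0"
    and tail: "eventually (\<lambda>n. measure M {x \<in> space M. enat n < U x} \<le> C * exp (- c * real n)) sequentially"
    and increments: "eventually (\<lambda>n. AE x in M. \<bar>X (Suc n) x - X n x\<bar> \<le> K * real n powr d) sequentially"
  shows "integrable M (stopped_value X U)"
    and "(\<lambda>k. \<integral>x. stopped_increment X U k x \<partial>M)
           sums ((\<integral>x. stopped_value X U x \<partial>M) - (\<integral>x. X 0 x \<partial>M))"
proof -
  interpret prob_space M by fact
  have U: "U \<in> M \<rightarrow>\<^sub>M count_space UNIV"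
    using assms(2,3) by (rule enat_stopping_time_measurable)
  have "(\<lambda>n. measure M {x \<in> space M. enat n < U x}) \<longlonglongrightarrow> 0"
    using assms(6) by (intro tendsto_sandwich[OF _ tail tendsto_const]) (auto, real_asymp)
  then have "AE x in M. U x \<noteq> \<infinity>"
    by (intro AE_enat_finite_if_tail_tendsto_0 U finite_measure_axioms)
  moreover have "summable (\<lambda>k. \<integral>x. \<bar>stopped_increment X U k x\<bar> \<partial>M)"
    by (rule summable_integral_abs_stopped_increment[OF assms(1) U assms(4-6) tail increments])
  ultimately show "integrable M (stopped_value X U)"
    and "(\<lambda>k. \<integral>x. stopped_increment X U k x \<partial>M)
           sums ((\<integral>x. stopped_value X U x \<partial>M) - (\<integral>x. X 0 x \<partial>M))"
    by (rule stopped_value_integrable_and_sums[OF U _ assms(4)])+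
qed

theorem theorem5p2:
  fixes M :: "'a measure" and F :: "nat \<Rightarrow> 'a measure"
    and U :: "'a \<Rightarrow> enat" and X :: "nat \<Rightarrow> 'a \<Rightarrow> real"
    and K c1 c2 d :: real
  assumes "prob_space M"
    and "nat_filtration M F"
    and "enat_stopping_time M F U"
    and "K > 0" and "c1 > 0" and "c2 > 0" and "d > 0"
    and "\<exists>N. \<forall>n\<ge>N. measure M {x \<in> space M. U x > enat n} \<le> c1 * exp (- c2 * real n)"
    and "\<forall>n\<ge>1. AE x in M. \<bar>X (Suc n) x - X n x\<bar> \<le> K * real n powr d"
  shows "(martingale M F X \<longrightarrow>
            integrable M (stopped_value X U) \<and>
            (\<integral>x. stopped_value X U x \<partial>M) = (\<integral>x. X 0 x \<partial>M))
       \<and> (supermartingale M F X \<longrightarrow>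
            integrable M (stopped_value X U) \<and>
            (\<integral>x. stopped_value X U x \<partial>M) \<le> (\<integral>x. X 0 x \<partial>M))"
proof -
  have tail: "eventually (\<lambda>n. measure M {x \<in> space M. enat n < U x} \<le> c1 * exp (- c2 * real n)) sequentially"
    using assms(8) by (simp add: eventually_sequentially)
  have increments: "eventually (\<lambda>n. AE x in M. \<bar>X (Suc n) x - X n x\<bar> \<le> K * real n powr d) sequentially"
    using assms(9) eventually_sequentially by blast
  note stopped = stopped_value_integrable_and_sums_if_exponential_tail
    [OF assms(1-3) _ less_imp_le[OF assms(4)] assms(6) tail increments]
  show ?thesis
  proof (intro conjI impI)
    assume martingale: "martingale M F X"
    then have integrable: "\<And>n. integrable M (X n)"
      by (simp add: martingale_def)
    then show "integrable M (stopped_value X U)"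
      by (rule stopped(1))
    have "(\<lambda>k. 0) sums ((\<integral>x. stopped_value X U x \<partial>M) - (\<integral>x. X 0 x \<partial>M))"
      using stopped(2)[OF integrable]
      by (simp add: martingale_integral_stopped_increment[OF assms(1-3) martingale])
    then show "(\<integral>x. stopped_value X U x \<partial>M) = (\<integral>x. X 0 x \<partial>M)"
      by (auto dest: sums_unique)
  next
    assume supermartingale: "supermartingale M F X"
    then have integrable: "\<And>n. integrable M (X n)"
      by (simp add: supermartingale_def)
    then show "integrable M (stopped_value X U)"
      by (rule stopped(1))
    have "(\<integral>x. stopped_value X U x \<partial>M) - (\<integral>x. X 0 x \<partial>M) \<le> 0"
      by (rule sums_le[OF _ stopped(2)[OF integrable] sums_zero])
         (rule supermartingale_integral_stopped_increment[OF assms(1-3) supermartingale])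
    then show "(\<integral>x. stopped_value X U x \<partial>M) \<le> (\<integral>x. X 0 x \<partial>M)"
      by simp
  qed
qed

end
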